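(* Let $\rho:\mathbb{R}\to\mathbb{R}$ be a nonlinearity and $\mathcal{J}$ a finite index set. Suppose that $\{(\alpha_s,\beta_s,\gamma_s)\}_{s\in\mathcal{J}}$ are triples of real numbers such that $\sum_{s\in\mathcal{J}}\alpha_s\rho(\beta_s\cdot+\gamma_s)$ is constant, and let $j^*\in\mathcal{J}$ be such that $\alpha_{j^*}\ne0$. Then there exist a set $\mathcal{I}\subset\mathcal{J}$ with $j^*\in\mathcal{I}$, real numbers $\{\tilde\alpha_s\}_{s\in\mathcal{I}}$ with $\tilde\alpha_{j^*}\ne0$, and $\zeta\in\mathbb{R}$ such that $(\zeta,\{(\tilde\alpha_s,\beta_s,\gamma_s)\}_{s\in\mathcal{I}})$ is an affine symmetry of $\rho$.
   Context: A nonlinearity is a continuous function $\rho:\mathbb{R}\to\mathbb{R}$ that is not of the form $t\mapsto at+b$. An affine symmetry of $\rho$ is a collection $(\zeta,\{(\alpha_s,\beta_s,\gamma_s)\}_{s\in\mathcal{I}})$ of reals, with $\mathcal{I}$ nonempty finite, such that $\sum_{s\in\mathcal{I}}\alpha_s\rho(\beta_st+\gamma_s)=\zeta$ for all $t\in\mathbb{R}$, and there is no proper subset $\mathcal{I}'\subsetneq\mathcal{I}$ for which $\{\rho(\beta_s\cdot+\gamma_s):s\in\mathcal{I}'\}\cup\{\mathbf1\}$ is linearly dependent ($\mathbf1$ the constant function $1$). *)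

theory Defs
  imports "HOL-Analysis.Analysis"
begin

definition nonlinearity :: "(real \<Rightarrow> real) \<Rightarrow> bool" where
  "nonlinearity \<rho> \<longleftrightarrow> continuous_on UNIV \<rho> \<and> \<not> (\<exists>a b. \<forall>t. \<rho> t = a * t + b)"

definition lin_dep_with_const ::
  "(real \<Rightarrow> real) \<Rightarrow> ('a \<Rightarrow> real) \<Rightarrow> ('a \<Rightarrow> real) \<Rightarrow> 'a set \<Rightarrow> bool" where
  "lin_dep_with_const \<rho> \<beta> \<gamma> I' \<longleftrightarrow>
     (\<exists>c c0. (c0 \<noteq> 0 \<or> (\<exists>s\<in>I'. c s \<noteq> 0)) \<and>
        (\<forall>t. (\<Sum>s\<in>I'. c s * \<rho> (\<beta> s * t + \<gamma> s)) + c0 = 0))"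

definition affine_symmetry ::
  "(real \<Rightarrow> real) \<Rightarrow> real \<Rightarrow> 'a set \<Rightarrow> ('a \<Rightarrow> real) \<Rightarrow> ('a \<Rightarrow> real) \<Rightarrow> ('a \<Rightarrow> real) \<Rightarrow> bool" where
  "affine_symmetry \<rho> \<zeta> I \<alpha> \<beta> \<gamma> \<longleftrightarrow>
     I \<noteq> {} \<and> finite I \<and>
     (\<forall>t. (\<Sum>s\<in>I. \<alpha> s * \<rho> (\<beta> s * t + \<gamma> s)) = \<zeta>) \<and>
     \<not> (\<exists>I'. I' \<subset> I \<and> lin_dep_with_const \<rho> \<beta> \<gamma> I')"

end

theory Submission
  imports Defs
begin

(* Among all constant combinations supported in J with a nonzero coefficient at j*, take one
   of minimal support I. If some proper subfamily of I together with 1 were linearly dependent,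
   that dependence would itself be a constant combination over a proper subset; either it
   already has a nonzero coefficient at j*, or subtracting a suitable multiple of it kills
   one coefficient other than j*. Both contradict minimality. *)

definition constant_combination ::
  "(real \<Rightarrow> real) \<Rightarrow> ('a \<Rightarrow> real) \<Rightarrow> ('a \<Rightarrow> real) \<Rightarrow> 'a set \<Rightarrow> ('a \<Rightarrow> real) \<Rightarrow> real \<Rightarrow> bool"
  where "constant_combination \<rho> \<beta> \<gamma> I \<alpha> \<zeta> \<longleftrightarrow> (\<forall>t. (\<Sum>s\<in>I. \<alpha> s * \<rho> (\<beta> s * t + \<gamma> s)) = \<zeta>)"

lemma lin_dep_with_const_obtains_constant_combination:
  assumes "lin_dep_with_const \<rho> \<beta> \<gamma> I"
  obtains c \<zeta> s0 where "s0 \<in> I" "c s0 \<noteq> 0" "constant_combination \<rho> \<beta> \<gamma> I c \<zeta>"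
proof -
  obtain c c0 where nonzero: "c0 \<noteq> 0 \<or> (\<exists>s\<in>I. c s \<noteq> 0)"
    and dep: "\<And>t. (\<Sum>s\<in>I. c s * \<rho> (\<beta> s * t + \<gamma> s)) + c0 = 0"
    using assms unfolding lin_dep_with_const_def by blast
  have "\<exists>s\<in>I. c s \<noteq> 0"
  proof (rule ccontr)
    assume "\<not> (\<exists>s\<in>I. c s \<noteq> 0)"
    then show False using dep[of 0] nonzero by simp
  qed
  moreover have "constant_combination \<rho> \<beta> \<gamma> I c (- c0)"
    using dep unfolding constant_combination_def by (simp add: eq_neg_iff_add_eq_0)
  ultimately show thesis using that by blast
qed

lemma constant_combination_extend_by_zero:
  assumes "finite I" "I' \<subseteq> I" "constant_combination \<rho> \<beta> \<gamma> I' c \<zeta>"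
  shows "constant_combination \<rho> \<beta> \<gamma> I (\<lambda>s. if s \<in> I' then c s else 0) \<zeta>"
  unfolding constant_combination_def
proof
  fix t
  have "(\<Sum>s\<in>I. (if s \<in> I' then c s else 0) * \<rho> (\<beta> s * t + \<gamma> s))
      = (\<Sum>s\<in>I'. (if s \<in> I' then c s else 0) * \<rho> (\<beta> s * t + \<gamma> s))"
    using assms(1,2) by (intro sum.mono_neutral_right) auto
  also have "\<dots> = (\<Sum>s\<in>I'. c s * \<rho> (\<beta> s * t + \<gamma> s))"
    by (intro sum.cong) auto
  finally show "(\<Sum>s\<in>I. (if s \<in> I' then c s else 0) * \<rho> (\<beta> s * t + \<gamma> s)) = \<zeta>"
    using assms(3) unfolding constant_combination_def by simp
qed

lemma constant_combination_diff_scaled: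
  assumes "constant_combination \<rho> \<beta> \<gamma> I a \<zeta>" "constant_combination \<rho> \<beta> \<gamma> I b \<eta>"
  shows "constant_combination \<rho> \<beta> \<gamma> I (\<lambda>s. a s - k * b s) (\<zeta> - k * \<eta>)"
  unfolding constant_combination_def
proof
  fix t
  have "(\<Sum>s\<in>I. (a s - k * b s) * \<rho> (\<beta> s * t + \<gamma> s))
      = (\<Sum>s\<in>I. a s * \<rho> (\<beta> s * t + \<gamma> s)) - k * (\<Sum>s\<in>I. b s * \<rho> (\<beta> s * t + \<gamma> s))"
    by (simp add: algebra_simps sum_subtractf sum_distrib_left)
  then show "(\<Sum>s\<in>I. (a s - k * b s) * \<rho> (\<beta> s * t + \<gamma> s)) = \<zeta> - k * \<eta>"
    using assms unfolding constant_combination_def by simp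
qed

lemma constant_combination_remove_zero:
  assumes "finite I" "a s0 = 0" "constant_combination \<rho> \<beta> \<gamma> I a \<zeta>"
  shows "constant_combination \<rho> \<beta> \<gamma> (I - {s0}) a \<zeta>"
  using assms by (simp add: constant_combination_def sum_diff1)

lemma constant_combination_shrink:
  assumes "finite I" "constant_combination \<rho> \<beta> \<gamma> I \<alpha> \<zeta>" "j \<in> I" "\<alpha> j \<noteq> 0"
    and "I' \<subset> I" "lin_dep_with_const \<rho> \<beta> \<gamma> I'"
  obtains I'' \<alpha>'' \<zeta>'' where "I'' \<subset> I" "j \<in> I''" "\<alpha>'' j \<noteq> 0"
    "constant_combination \<rho> \<beta> \<gamma> I'' \<alpha>'' \<zeta>''"
proof -
  obtain c \<eta> s0 where s0: "s0 \<in> I'" "c s0 \<noteq> 0" and dep: "constant_combination \<rho> \<beta> \<gamma> I' c \<eta>"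
    using lin_dep_with_const_obtains_constant_combination assms(6) by metis
  show thesis
  proof (cases "j \<in> I' \<and> c j \<noteq> 0")
    case True
    then show thesis using that assms(5) dep by blast
  next
    case False
    define c' where "c' = (\<lambda>s. if s \<in> I' then c s else 0)"
    define k where "k = \<alpha> s0 / c s0"
    define \<alpha>'' where "\<alpha>'' = (\<lambda>s. \<alpha> s - k * c' s)"
    have "constant_combination \<rho> \<beta> \<gamma> I c' \<eta>"
      unfolding c'_def using constant_combination_extend_by_zero assms(1,5) dep by blast
    then have "constant_combination \<rho> \<beta> \<gamma> I \<alpha>'' (\<zeta> - k * \<eta>)"
      unfolding \<alpha>''_def using constant_combination_diff_scaled assms(2) by blast
    moreover have "\<alpha>'' s0 = 0" using s0 by (simp add: \<alpha>''_def c'_def k_def)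
    ultimately have "constant_combination \<rho> \<beta> \<gamma> (I - {s0}) \<alpha>'' (\<zeta> - k * \<eta>)"
      by (intro constant_combination_remove_zero assms(1))
    moreover have "s0 \<noteq> j" "\<alpha>'' j \<noteq> 0"
      using False s0 assms(4) by (auto simp: \<alpha>''_def c'_def)
    moreover have "I - {s0} \<subset> I" using s0 assms(5) by blast
    ultimately show thesis using that assms(3) by blast
  qed
qed

lemma affine_symmetry_if_minimal_support:
  assumes "finite I" "constant_combination \<rho> \<beta> \<gamma> I \<alpha> \<zeta>" "j \<in> I" "\<alpha> j \<noteq> 0"
    and minimal: "\<And>I'' \<alpha>'' \<zeta>''. \<lbrakk>I'' \<subset> I; j \<in> I''; \<alpha>'' j \<noteq> 0\<rbrakk>
      \<Longrightarrow> \<not> constant_combination \<rho> \<beta> \<gamma> I'' \<alpha>'' \<zeta>''"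
  shows "affine_symmetry \<rho> \<zeta> I \<alpha> \<beta> \<gamma>"
proof -
  have "\<not> lin_dep_with_const \<rho> \<beta> \<gamma> I'" if proper: "I' \<subset> I" for I'
  proof
    assume "lin_dep_with_const \<rho> \<beta> \<gamma> I'"
    then obtain I'' \<alpha>'' \<zeta>'' where "I'' \<subset> I" "j \<in> I''" "\<alpha>'' j \<noteq> 0"
      and "constant_combination \<rho> \<beta> \<gamma> I'' \<alpha>'' \<zeta>''"
      by (rule constant_combination_shrink[OF assms(1-4) proper])
    with minimal show False by blast
  qed
  moreover have "\<forall>t. (\<Sum>s\<in>I. \<alpha> s * \<rho> (\<beta> s * t + \<gamma> s)) = \<zeta>"
    using assms(2) unfolding constant_combination_def .
  ultimately show ?thesis
    using assms(1,3) unfolding affine_symmetry_def by blast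
qed

theorem lemma7:
  fixes \<rho> :: "real \<Rightarrow> real"
    and J :: "'a set"
    and \<alpha> \<beta> \<gamma> :: "'a \<Rightarrow> real"
    and jstar :: 'a
  assumes "nonlinearity \<rho>"
    and "finite J"
    and "\<exists>C. \<forall>t. (\<Sum>s\<in>J. \<alpha> s * \<rho> (\<beta> s * t + \<gamma> s)) = C"
    and "jstar \<in> J"
    and "\<alpha> jstar \<noteq> 0"
  shows "\<exists>I \<alpha>' \<zeta>. I \<subseteq> J \<and> jstar \<in> I \<and> \<alpha>' jstar \<noteq> 0 \<and>
           affine_symmetry \<rho> \<zeta> I \<alpha>' \<beta> \<gamma>"
proof -
  define admissible where "admissible = (\<lambda>I. I \<subseteq> J \<and> jstar \<in> I \<and>
    (\<exists>\<alpha>' \<zeta>. \<alpha>' jstar \<noteq> 0 \<and> constant_combination \<rho> \<beta> \<gamma> I \<alpha>' \<zeta>))"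
  have "admissible J"
    using assms(3-5) unfolding admissible_def constant_combination_def by blast
  then obtain I where "admissible I" and least: "\<And>I''. admissible I'' \<Longrightarrow> card I \<le> card I''"
    using ex_has_least_nat[of admissible _ card] by blast
  then obtain \<alpha>' \<zeta> where "I \<subseteq> J" "jstar \<in> I" "\<alpha>' jstar \<noteq> 0"
    and comb: "constant_combination \<rho> \<beta> \<gamma> I \<alpha>' \<zeta>"
    unfolding admissible_def by blast
  have "finite I" using \<open>I \<subseteq> J\<close> assms(2) finite_subset by blast
  have minimal: "\<not> constant_combination \<rho> \<beta> \<gamma> I'' \<alpha>'' \<zeta>''"
    if "I'' \<subset> I" "jstar \<in> I''" "\<alpha>'' jstar \<noteq> 0" for I'' \<alpha>'' \<zeta>''
  proof
    assume "constant_combination \<rho> \<beta> \<gamma> I'' \<alpha>'' \<zeta>''"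
    with that \<open>I \<subseteq> J\<close> have "admissible I''" unfolding admissible_def by blast
    with least have "card I \<le> card I''" by blast
    moreover have "card I'' < card I" using psubset_card_mono[OF \<open>finite I\<close> \<open>I'' \<subset> I\<close>] .
    ultimately show False by simp
  qed
  have "affine_symmetry \<rho> \<zeta> I \<alpha>' \<beta> \<gamma>"
    using \<open>finite I\<close> comb \<open>jstar \<in> I\<close> \<open>\<alpha>' jstar \<noteq> 0\<close> minimal
    by (rule affine_symmetry_if_minimal_support)
  with \<open>I \<subseteq> J\<close> \<open>jstar \<in> I\<close> \<open>\<alpha>' jstar \<noteq> 0\<close> show ?thesis by blast
qed

end
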